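(* Let $\mathcal{A}$ be a safe GTA without renamings with clock set $X=X_F\uplus X_H$, and let $M\in\mathbb{N}$ be such that every finite constant $c$ appearing in a guard of $\mathcal{A}$ satisfies $|c|\le M$. Then $\approx_M$ is a time-abstract bisimulation: for all valuations $v_1\approx_M v_2$, (a) for every $\delta_1\ge 0$ such that $v_1+\delta_1$ is a valuation there is $\delta_2\ge 0$ such that $v_2+\delta_2$ is a valuation and $v_1+\delta_1\approx_M v_2+\delta_2$; and (b) for every transition $t$ of $\mathcal{A}$ and state $q$, if $(q,v_1)\xrightarrow{t}(q',v_1')$ then there is $v_2'$ with $(q,v_2)\xrightarrow{t}(q',v_2')$ and $v_1'\approx_M v_2'$ (and symmetrically with the roles of $v_1,v_2$ exchanged).
   Context: Clocks, valuations, constraints: $X=X_F\uplus X_H$ finite, future clocks $X_F$, history clocks $X_H$, plus constant clock $0$. $\overline{\mathbb{R}}=\mathbb{R}\cup\{\pm\infty\}$ with $(+\infty)+\alpha=+\infty$, $(-\infty)+\beta=-\infty$ for $\beta\ne+\infty$, $-(\pm\infty)=\mp\infty$. A valuation $v:X\cup\{0\}\to\overline{\mathbb{R}}$ has $v(0)=0$, history clocks in $\mathbb{R}_{\ge0}\cup\{+\infty\}$, future clocks in $\mathbb{R}_{\le0}\cup\{-\infty\}$. Constraints are conjunctions of $x-y\triangleleft c$ ($x,y\in X\cup\{0\}$, ${\triangleleft}\in\{<,\le\}$, $c\in\mathbb{Z}\cup\{\pm\infty\}$), $v\models x-y\triangleleft c$ iff $v(x)-v(y)\triangleleft c$. $v+\delta$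 adds $\delta$ to every clock; $[R]v$ ($R\subseteq X$) is the set of $v'$ with $v'(x)=0$ for $x\in R\cap X_H$, $v'(x)=v(x)$ for $x\notin R$, arbitrary for $x\in R\cap X_F$. A GTA without renamings $\mathcal{A}=(Q,\Sigma,X,\Delta,\mathcal{I},Q_f)$ has transitions $(q,a,\mathsf{prog},q')$ where $\mathsf{prog}$ is a sequence of guards $g$ (with $v\xrightarrow{g}v$ iff $v\models g$) and changes $[R]$ (with $v\xrightarrow{[R]}v'$ iff $v'\in[R]v$); $(q,v)\xrightarrow{t}(q',v')$ iff $t=(q,a,\mathsf{prog},q')$ and $v\xrightarrow{\mathsf{prog}}v'$. Safety: with $X_D$ the future clocks occurring in guards $x-y\triangleleft c$ with $x,y\in X_F$, every program checks each clock of $X_D$ to be $0$ or $-\infty$ before releasing it, and initial guards force history clocks to $0$ or $+\infty$. For $\alpha\in\mathbb{R}$, $\lfloor\alpha\rfloor$ is its integer part and $\{\alpha\}=\alpha-\lfloor\alpha\rfloor$. Equivalence $\approx_M$: $v_1\approx_M v_2$ iff for all clocks $x,y$: (1) $v_1(x)\triangleleft c$ iff $v_2(x)\triangleleft c$ for all ${\triangleleft}\in\{<,\le\}$ and all $c\in\{-\infty,+\infty\}$ or $c\in\mathbb{Z}$ with $c\le M$; (2) $v_1\models x-y\triangleleft c$ iff $v_2\models x-y\triangleleft c$ for all ${\triangleleft}\in\{<,\le\}$ and $c\in\{\pm\infty\}$ or $c\in\mathbb{Z}$ with $|c|\le M$; (3) if $-\infty<v_1(x),v_1(y)\le M$ then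 $\{v_1(x)\}\le\{v_1(y)\}$ iff $\{v_2(x)\}\le\{v_2(y)\}$. *)

theory Defs
  imports Complex_Main "HOL-Library.Extended_Real"
begin

text \<open>Clocks are the elements of a finite type 'c (this type is the clock set X).
  The future clocks are a set XF, the history clocks are the rest (X_H = UNIV - XF).
  Clock terms additionally contain the constant clock 0.\<close>

datatype 'c clk = Zero | Clk 'c

datatype rel = Lt | Le

text \<open>An atomic constraint (x, y, r, c) stands for  x - y r c.\<close>
type_synonym 'c atom = "'c clk \<times> 'c clk \<times> rel \<times> ereal"
type_synonym 'c guard = "'c atom list"

datatype 'c instr = Guard "'c guard" | Change "'c set"
type_synonym 'c prog = "'c instr list"

type_synonym 'c val = "'c \<Rightarrow> ereal"

fun cv :: "'c val \<Rightarrow> 'c clk \<Rightarrow> ereal" where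
  "cv v Zero = 0"
| "cv v (Clk x) = v x"

definition ediff :: "ereal \<Rightarrow> ereal \<Rightarrow> ereal" where
  "ediff a b = a + - b"

fun holds :: "rel \<Rightarrow> ereal \<Rightarrow> ereal \<Rightarrow> bool" where
  "holds Lt a b = (a < b)"
| "holds Le a b = (a \<le> b)"

fun sat_atom :: "'c val \<Rightarrow> 'c atom \<Rightarrow> bool" where
  "sat_atom v (x, y, r, c) = holds r (ediff (cv v x) (cv v y)) c"

definition sat :: "'c val \<Rightarrow> 'c guard \<Rightarrow> bool" where
  "sat v g = (\<forall>a\<in>set g. sat_atom v a)"

definition is_val :: "'c set \<Rightarrow> 'c val \<Rightarrow> bool" where
  "is_val XF v = (\<forall>x. (x \<in> XF \<longrightarrow> v x \<le> 0) \<and> (x \<notin> XF \<longrightarrow> 0 \<le> v x))"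

definition shift :: "'c val \<Rightarrow> real \<Rightarrow> 'c val" where
  "shift v d = (\<lambda>x. v x + ereal d)"

definition change :: "'c set \<Rightarrow> 'c set \<Rightarrow> 'c val \<Rightarrow> 'c val set" where
  "change XF R v = {v'. is_val XF v' \<and> (\<forall>x\<in>R - XF. v' x = 0) \<and> (\<forall>x. x \<notin> R \<longrightarrow> v' x = v x)}"

fun exec :: "'c set \<Rightarrow> 'c prog \<Rightarrow> 'c val \<Rightarrow> 'c val set" where
  "exec XF [] v = {v}"
| "exec XF (Guard g # p) v = (if sat v g then exec XF p v else {})"
| "exec XF (Change R # p) v = (\<Union>v'\<in>change XF R v. exec XF p v')"

record ('q, 's, 'c) gta =
  states :: "'q set"
  alph :: "'s set"
  trans :: "('q \<times> 's \<times> 'c prog \<times> 'q) set"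
  init :: "('q \<times> 'c guard) set"
  final :: "'q set"

definition step :: "'c set \<Rightarrow> ('q, 's, 'c) gta \<Rightarrow> 'q \<Rightarrow> 'c val \<Rightarrow>
    ('q \<times> 's \<times> 'c prog \<times> 'q) \<Rightarrow> 'q \<Rightarrow> 'c val \<Rightarrow> bool" where
  "step XF A q v t q' v' =
     (t \<in> trans A \<and> (\<exists>a p. t = (q, a, p, q') \<and> v' \<in> exec XF p v))"

definition prog_guards :: "'c prog \<Rightarrow> 'c atom set" where
  "prog_guards p = (\<Union>i\<in>set p. case i of Guard g \<Rightarrow> set g | Change _ \<Rightarrow> {})"

definition trans_atoms :: "('q, 's, 'c) gta \<Rightarrow> 'c atom set" where
  "trans_atoms A = (\<Union>(q, a, p, q')\<in>trans A. prog_guards p)"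

definition init_atoms :: "('q, 's, 'c) gta \<Rightarrow> 'c atom set" where
  "init_atoms A = (\<Union>(q, g)\<in>init A. set g)"

definition is_const :: "ereal \<Rightarrow> bool" where
  "is_const c = (c = \<infinity> \<or> c = -\<infinity> \<or> (\<exists>k::int. c = ereal (real_of_int k)))"

definition wf_gta :: "('q, 's, 'c) gta \<Rightarrow> bool" where
  "wf_gta A =
    (finite (states A) \<and> finite (alph A) \<and> finite (trans A) \<and> finite (init A) \<and>
     (\<forall>(q, a, p, q')\<in>trans A. q \<in> states A \<and> a \<in> alph A \<and> q' \<in> states A) \<and>
     (\<forall>(q, g)\<in>init A. q \<in> states A) \<and> final A \<subseteq> states A \<and>
     (\<forall>(x, y, r, c)\<in>trans_atoms A \<union> init_atoms A. is_const c))"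

definition XD :: "'c set \<Rightarrow> ('q, 's, 'c) gta \<Rightarrow> 'c set" where
  "XD XF A = {z. \<exists>x y r c. (Clk x, Clk y, r, c) \<in> trans_atoms A \<and> x \<in> XF \<and> y \<in> XF \<and>
                  (z = x \<or> z = y)}"

text \<open>Safety: every program ensures that each clock of X_D is 0 or -oo whenever it is
  released (i.e. just before every change [R] with the clock in R), and initial guards force
  history clocks to be 0 or +oo.\<close>
definition safe :: "'c set \<Rightarrow> ('q, 's, 'c) gta \<Rightarrow> bool" where
  "safe XF A =
    ((\<forall>(q, a, p, q')\<in>trans A. \<forall>i<length p. \<forall>R. p ! i = Change R \<longrightarrow>
        (\<forall>v u x. is_val XF v \<longrightarrow> u \<in> exec XF (take i p) v \<longrightarrow> x \<in> R \<inter> XD XF A \<longrightarrow>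
           u x = 0 \<or> u x = -\<infinity>)) \<and>
     (\<forall>(q, g)\<in>init A. \<forall>v. is_val XF v \<longrightarrow> sat v g \<longrightarrow>
        (\<forall>x. x \<notin> XF \<longrightarrow> v x = 0 \<or> v x = \<infinity>)))"

definition bounded_by :: "nat \<Rightarrow> ('q, 's, 'c) gta \<Rightarrow> bool" where
  "bounded_by M A =
    (\<forall>(x, y, r, c)\<in>trans_atoms A. \<bar>c\<bar> \<noteq> \<infinity> \<longrightarrow> \<bar>c\<bar> \<le> ereal (real M))"

definition approx :: "nat \<Rightarrow> 'c val \<Rightarrow> 'c val \<Rightarrow> bool" where
  "approx M v1 v2 =
    ((\<forall>x r c. (c = \<infinity> \<or> c = -\<infinity> \<or> (\<exists>k::int. c = ereal (real_of_int k) \<and> k \<le> int M)) \<longrightarrow>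
        (holds r (cv v1 x) c \<longleftrightarrow> holds r (cv v2 x) c)) \<and>
     (\<forall>x y r c. (c = \<infinity> \<or> c = -\<infinity> \<or> (\<exists>k::int. c = ereal (real_of_int k) \<and> \<bar>k\<bar> \<le> int M)) \<longrightarrow>
        (holds r (ediff (cv v1 x) (cv v1 y)) c \<longleftrightarrow> holds r (ediff (cv v2 x) (cv v2 y)) c)) \<and>
     (\<forall>x y. -\<infinity> < cv v1 x \<and> cv v1 x \<le> ereal (real M) \<and> -\<infinity> < cv v1 y \<and> cv v1 y \<le> ereal (real M) \<longrightarrow>
        (frac (real_of_ereal (cv v1 x)) \<le> frac (real_of_ereal (cv v1 y)) \<longleftrightarrow>
         frac (real_of_ereal (cv v2 x)) \<le> frac (real_of_ereal (cv v2 y)))))"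

definition ta_sim :: "'c set \<Rightarrow> ('q, 's, 'c) gta \<Rightarrow> ('c val \<Rightarrow> 'c val \<Rightarrow> bool) \<Rightarrow> bool" where
  "ta_sim XF A Rel =
    (\<forall>v1 v2. is_val XF v1 \<and> is_val XF v2 \<and> Rel v1 v2 \<longrightarrow>
       (\<forall>d1::real. d1 \<ge> 0 \<and> is_val XF (shift v1 d1) \<longrightarrow>
          (\<exists>d2::real. d2 \<ge> 0 \<and> is_val XF (shift v2 d2) \<and> Rel (shift v1 d1) (shift v2 d2))) \<and>
       (\<forall>t q q' v1'. step XF A q v1 t q' v1' \<longrightarrow>
          (\<exists>v2'. step XF A q v2 t q' v2' \<and> Rel v1' v2')))"

definition ta_bisim :: "'c set \<Rightarrow> ('q, 's, 'c) gta \<Rightarrow> ('c val \<Rightarrow> 'c val \<Rightarrow> bool) \<Rightarrow> bool" where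
  "ta_bisim XF A Rel = (ta_sim XF A Rel \<and> ta_sim XF A (\<lambda>v1 v2. Rel v2 v1))"

end

theory Submission
  imports Defs
begin

(* Restricted to the clocks whose value is finite and at most M, together with the constant
   clock 0, the relation approx_M says precisely that both valuations satisfy the same
   constraints x - y <= k for all integers k. On the remaining clocks it only records whether a
   value is -oo, +oo or a real above M, together with the diagonal constraints with constants
   in [-M, M]; hence guards, whose constants are bounded by M, cannot tell equivalent
   valuations apart.
   A delay d and the assignment of a value a <= 0 to a clock both adjoin one new real number
   (-d, respectively a) to the finite family of small clock values. Such an integer-difference
   type of finitely many reals containing 0 can always be extended by one point on the other
   side: put its fractional part at the same position among the existing fractional parts.
   The new point then has the same sign on both sides, so delays stay non-negative and
   assigned values non-positive. *)

subsection \<open>Integer-difference types of families of reals\<close>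

lemma diff_le_of_int_iff:
  fixes p q :: real
  shows "p - q \<le> of_int k \<longleftrightarrow> \<lfloor>p\<rfloor> - \<lfloor>q\<rfloor> < k \<or> (\<lfloor>p\<rfloor> - \<lfloor>q\<rfloor> = k \<and> frac p \<le> frac q)"
proof -
  define m where "m = \<lfloor>p\<rfloor> - \<lfloor>q\<rfloor>"
  have decompose: "p - q = of_int m + (frac p - frac q)"
    by (simp add: frac_def m_def)
  have "-1 < frac p - frac q" "frac p - frac q < 1"
    using frac_lt_1[of p] frac_lt_1[of q] frac_ge_0[of p] frac_ge_0[of q] by linarith+
  moreover consider "m + 1 \<le> k" | "m = k" | "k + 1 \<le> m" by linarith
  ultimately show ?thesis
    unfolding decompose m_def[symmetric] by cases (simp_all, linarith+)
qed

definition int_diff_equiv :: "'i set \<Rightarrow> ('i \<Rightarrow> real) \<Rightarrow> ('i \<Rightarrow> real) \<Rightarrow> bool" where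
  "int_diff_equiv S p q \<longleftrightarrow> (\<forall>i\<in>S. \<forall>j\<in>S. \<forall>k::int. p i - p j \<le> k \<longleftrightarrow> q i - q j \<le> k)"

lemma int_diff_equiv_less:
  assumes "int_diff_equiv S p q" "i \<in> S" "j \<in> S"
  shows "p i - p j < of_int k \<longleftrightarrow> q i - q j < of_int k"
proof -
  have "p j - p i \<le> of_int (- k) \<longleftrightarrow> q j - q i \<le> of_int (- k)"
    using assms unfolding int_diff_equiv_def by blast
  then show ?thesis by auto
qed

lemma int_diff_equiv_sym: "int_diff_equiv S p q \<Longrightarrow> int_diff_equiv S q p"
  unfolding int_diff_equiv_def by blast

lemma int_diff_equiv_translate:
  assumes "int_diff_equiv S p q" "T \<subseteq> S" "\<And>i. i \<in> T \<Longrightarrow> p' i = p i + c \<and> q' i = q i + d"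
  shows "int_diff_equiv T p' q'"
  using assms unfolding int_diff_equiv_def by (auto simp: subset_iff)

lemma int_diff_equiv_upd:
  assumes "int_diff_equiv S p q"
    and "\<And>i k. i \<in> S \<Longrightarrow>
      (a - p i \<le> of_int k \<longleftrightarrow> b - q i \<le> of_int k) \<and> (p i - a \<le> of_int k \<longleftrightarrow> q i - b \<le> of_int k)"
  shows "int_diff_equiv (insert n S) (p(n := a)) (q(n := b))"
  using assms unfolding int_diff_equiv_def by auto

lemma int_diff_equiv_iff_floor_frac:
  assumes "z \<in> S" "p z = 0" "q z = 0"
  shows "int_diff_equiv S p q \<longleftrightarrow>
    (\<forall>i\<in>S. \<lfloor>p i\<rfloor> = \<lfloor>q i\<rfloor>) \<and> (\<forall>i\<in>S. \<forall>j\<in>S. frac (p i) \<le> frac (p j) \<longleftrightarrow> frac (q i) \<le> frac (q j))"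
proof
  assume equiv: "int_diff_equiv S p q"
  have floor_eq: "\<lfloor>p i\<rfloor> = \<lfloor>q i\<rfloor>" if "i \<in> S" for i
  proof -
    have "p z - p i \<le> of_int (- k) \<longleftrightarrow> q z - q i \<le> of_int (- k)" for k
      using equiv \<open>z \<in> S\<close> \<open>i \<in> S\<close> unfolding int_diff_equiv_def by blast
    then have "k \<le> \<lfloor>p i\<rfloor> \<longleftrightarrow> k \<le> \<lfloor>q i\<rfloor>" for k
      using assms(2,3) by (simp add: le_floor_iff)
    then show ?thesis by (meson order.antisym order.refl)
  qed
  moreover have "frac (p i) \<le> frac (p j) \<longleftrightarrow> frac (q i) \<le> frac (q j)" if "i \<in> S" "j \<in> S" for i j
  proof -
    have "p i - p j \<le> of_int (\<lfloor>p i\<rfloor> - \<lfloor>p j\<rfloor>) \<longleftrightarrow> q i - q j \<le> of_int (\<lfloor>p i\<rfloor> - \<lfloor>p j\<rfloor>)"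
      using equiv that unfolding int_diff_equiv_def by blast
    then show ?thesis
      unfolding diff_le_of_int_iff floor_eq[OF that(1)] floor_eq[OF that(2)] by simp
  qed
  ultimately show "(\<forall>i\<in>S. \<lfloor>p i\<rfloor> = \<lfloor>q i\<rfloor>) \<and>
    (\<forall>i\<in>S. \<forall>j\<in>S. frac (p i) \<le> frac (p j) \<longleftrightarrow> frac (q i) \<le> frac (q j))" by blast
next
  assume "(\<forall>i\<in>S. \<lfloor>p i\<rfloor> = \<lfloor>q i\<rfloor>) \<and>
    (\<forall>i\<in>S. \<forall>j\<in>S. frac (p i) \<le> frac (p j) \<longleftrightarrow> frac (q i) \<le> frac (q j))"
  then show "int_diff_equiv S p q"
    unfolding int_diff_equiv_def by (simp add: diff_le_of_int_iff)
qed

lemma order_iso_extend: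
  fixes P :: "(real \<times> real) set" and t :: real
  assumes "finite P" "(0, 0) \<in> P" "\<forall>(p, q)\<in>P. q < 1" "0 \<le> t"
    and iso: "\<forall>(p, q)\<in>P. \<forall>(p', q')\<in>P. p \<le> p' \<longleftrightarrow> q \<le> q'"
  obtains t' where "0 \<le> t'" "t' < 1" "\<forall>(p, q)\<in>P. (p \<le> t \<longleftrightarrow> q \<le> t') \<and> (t \<le> p \<longleftrightarrow> t' \<le> q)"
proof (cases "\<exists>q. (t, q) \<in> P")
  case True
  then obtain q where "(t, q) \<in> P" by blast
  moreover have "0 \<le> q" using iso calculation assms(2,4) by fastforce
  ultimately show thesis using that[of q] assms(3) iso by fastforce
next
  case False
  then have "0 < t" using assms(2,4) by fastforce
  define L where "L = snd ` {pq\<in>P. fst pq < t}"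
  define U where "U = insert 1 (snd ` {pq\<in>P. t < fst pq})"
  have L: "finite L" "0 \<in> L" using assms(1,2) \<open>0 < t\<close> unfolding L_def by force+
  have U: "finite U" "1 \<in> U" using assms(1) unfolding U_def by auto
  have below: "l < u" if "l \<in> L" "u \<in> U" for l u
  proof -
    obtain p where p: "(p, l) \<in> P" "p < t" using \<open>l \<in> L\<close> unfolding L_def by force
    show "l < u"
    proof (cases "u = 1")
      case True
      then show ?thesis using p assms(3) by auto
    next
      case False
      then obtain p' where "(p', u) \<in> P" "t < p'" using \<open>u \<in> U\<close> unfolding U_def by force
      then show ?thesis using iso p by fastforce
    qed
  qed
  define t' where "t' = (Max L + Min U) / 2"
  have "Max L < Min U" using below L U by (metis Max_in Min_in empty_iff)
  then have t': "Max L < t'" "t' < Min U" unfolding t'_def by simp_all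
  have "0 \<le> t'" using t'(1) L Max_ge[of L 0] by linarith
  moreover have "t' < 1" using t'(2) U Min_le[of U 1] by linarith
  moreover have "(p \<le> t \<longleftrightarrow> q \<le> t') \<and> (t \<le> p \<longleftrightarrow> t' \<le> q)" if "(p, q) \<in> P" for p q
  proof -
    have "p \<noteq> t" using that False by auto
    then consider "p < t" | "t < p" by linarith
    then show ?thesis
    proof cases
      case 1
      then have "q \<in> L" unfolding L_def using that by force
      then have "q \<le> Max L" using L(1) by simp
      then show ?thesis using 1 t' by auto
    next
      case 2
      then have "q \<in> U" unfolding U_def using that by force
      then have "Min U \<le> q" using U(1) by simp
      then show ?thesis using 2 t' by auto
    qed
  qed
  ultimately show thesis using that[of t'] by blast
qed

lemma int_diff_equiv_extend:
  assumes equiv: "int_diff_equiv S p q" and "finite S" "z \<in> S" "p z = 0" "q z = 0"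
  obtains b where "\<And>i k. i \<in> S \<Longrightarrow>
    (a - p i \<le> of_int k \<longleftrightarrow> b - q i \<le> of_int k) \<and> (p i - a \<le> of_int k \<longleftrightarrow> q i - b \<le> of_int k)"
proof -
  have floor_eq: "\<forall>i\<in>S. \<lfloor>p i\<rfloor> = \<lfloor>q i\<rfloor>"
    and frac_iso: "\<forall>i\<in>S. \<forall>j\<in>S. frac (p i) \<le> frac (p j) \<longleftrightarrow> frac (q i) \<le> frac (q j)"
    using equiv int_diff_equiv_iff_floor_frac[of z S p q] assms(3-5) by blast+
  let ?P = "(\<lambda>i. (frac (p i), frac (q i))) ` S"
  obtain t' where t': "0 \<le> t'" "t' < 1"
    and placed: "\<forall>(f, g)\<in>?P. (f \<le> frac a \<longleftrightarrow> g \<le> t') \<and> (frac a \<le> f \<longleftrightarrow> t' \<le> g)"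
  proof (rule order_iso_extend[of ?P "frac a"])
    show "(0, 0) \<in> ?P" using assms(3-5) by force
  qed (use assms(2) frac_iso in \<open>auto simp: frac_lt_1\<close>)
  define b where "b = of_int \<lfloor>a\<rfloor> + t'"
  have floor_b: "\<lfloor>b\<rfloor> = \<lfloor>a\<rfloor>" unfolding b_def using t' by (simp add: floor_unique)
  have frac_b: "frac b = t'" unfolding frac_def floor_b unfolding b_def by simp
  show thesis
  proof (rule that)
    fix i k assume "i \<in> S"
    then show "(a - p i \<le> of_int k \<longleftrightarrow> b - q i \<le> of_int k) \<and> (p i - a \<le> of_int k \<longleftrightarrow> q i - b \<le> of_int k)"
      using floor_eq placed unfolding diff_le_of_int_iff floor_b frac_b by auto
  qed
qed

subsection \<open>The equivalence on small clocks and on bands\<close>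

instance clk :: (finite) finite
proof
  have "(UNIV :: 'a clk set) = insert Zero (range Clk)"
    by (auto intro: clk.exhaust)
  moreover have "finite (range (Clk :: 'a \<Rightarrow> 'a clk))" by simp
  ultimately show "finite (UNIV :: 'a clk set)" by (metis finite_insert)
qed

definition real_cv :: "'c val \<Rightarrow> 'c clk \<Rightarrow> real" where
  "real_cv v z = real_of_ereal (cv v z)"

definition small :: "nat \<Rightarrow> 'c val \<Rightarrow> 'c clk \<Rightarrow> bool" where
  "small M v z \<longleftrightarrow> -\<infinity> < cv v z \<and> cv v z \<le> ereal (real M)"

definition same_band :: "nat \<Rightarrow> ereal \<Rightarrow> ereal \<Rightarrow> bool" where
  "same_band M a b \<longleftrightarrow>
    (a = -\<infinity> \<longleftrightarrow> b = -\<infinity>) \<and> (a = \<infinity> \<longleftrightarrow> b = \<infinity>) \<and> (a \<le> ereal (real M) \<longleftrightarrow> b \<le> ereal (real M))"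

definition le_const :: "nat \<Rightarrow> ereal \<Rightarrow> bool" where
  "le_const M c \<longleftrightarrow> c = \<infinity> \<or> c = -\<infinity> \<or> (\<exists>k::int. c = ereal (of_int k) \<and> k \<le> int M)"

definition abs_le_const :: "nat \<Rightarrow> ereal \<Rightarrow> bool" where
  "abs_le_const M c \<longleftrightarrow> c = \<infinity> \<or> c = -\<infinity> \<or> (\<exists>k::int. c = ereal (of_int k) \<and> \<bar>k\<bar> \<le> int M)"

lemma approx_conds:
  "approx M v1 v2 \<longleftrightarrow>
    (\<forall>z r c. le_const M c \<longrightarrow> (holds r (cv v1 z) c \<longleftrightarrow> holds r (cv v2 z) c)) \<and>
    (\<forall>y z r c. abs_le_const M c \<longrightarrow>
       (holds r (ediff (cv v1 y) (cv v1 z)) c \<longleftrightarrow> holds r (ediff (cv v2 y) (cv v2 z)) c)) \<and>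
    (\<forall>y z. small M v1 y \<and> small M v1 z \<longrightarrow>
       (frac (real_cv v1 y) \<le> frac (real_cv v1 z) \<longleftrightarrow> frac (real_cv v2 y) \<le> frac (real_cv v2 z)))"
  unfolding approx_def le_const_def abs_le_const_def small_def real_cv_def by (simp only: conj_assoc)

lemma approx_diag:
  "approx M v1 v2 \<Longrightarrow> abs_le_const M c \<Longrightarrow>
    holds r (ediff (v1 x) (v1 y)) c \<longleftrightarrow> holds r (ediff (v2 x) (v2 y)) c"
  unfolding approx_conds by (metis cv.simps(2))

lemma small_Zero [simp]: "small M v Zero"
  by (simp add: small_def)

lemma real_cv_Zero [simp]: "real_cv v Zero = 0"
  by (simp add: real_cv_def)

lemma cv_eq_ereal_real_cv: "small M v z \<Longrightarrow> cv v z = ereal (real_cv v z)"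
  unfolding small_def real_cv_def by (cases "cv v z") auto

lemma ediff_ereal [simp]: "ediff (ereal a) (ereal b) = ereal (a - b)"
  by (simp add: ediff_def)

lemma ediff_0 [simp]: "ediff a 0 = a" "ediff 0 a = - a"
  by (simp_all add: ediff_def)

lemma holds_ereal_of_int:
  "holds r (ereal s) (ereal (of_int k)) \<longleftrightarrow> (case r of Lt \<Rightarrow> s < of_int k | Le \<Rightarrow> s \<le> of_int k)"
  by (cases r) auto

lemma holds_above_le_const: "real M < s \<Longrightarrow> le_const M c \<Longrightarrow> holds r (ereal s) c \<longleftrightarrow> c = \<infinity>"
  unfolding le_const_def by (cases r) auto

lemma holds_above_abs_le_const:
  assumes "abs_le_const M c"
  shows "real M < s \<Longrightarrow> holds r (ereal s) c \<longleftrightarrow> c = \<infinity>"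
    and "s < - real M \<Longrightarrow> holds r (ereal s) c \<longleftrightarrow> c \<noteq> -\<infinity>"
  using assms unfolding abs_le_const_def by (cases r; auto)+

lemma same_band_sym: "same_band M a b \<Longrightarrow> same_band M b a"
  unfolding same_band_def by blast

lemma not_small_cases:
  assumes "same_band M (cv v1 z) (cv v2 z)" "\<not> small M v1 z"
  shows "cv v1 z = -\<infinity> \<and> cv v2 z = -\<infinity> \<or> cv v1 z = \<infinity> \<and> cv v2 z = \<infinity> \<or>
    (\<exists>p q. cv v1 z = ereal p \<and> cv v2 z = ereal q \<and> real M < p \<and> real M < q)"
  using assms unfolding same_band_def small_def
  by (cases "cv v1 z"; cases "cv v2 z") auto

lemma holds_ediff_not_small:
  assumes c: "abs_le_const M c" and "\<alpha> \<le> 0" "\<beta> \<le> 0"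
    and w: "w1 = -\<infinity> \<and> w2 = -\<infinity> \<or> w1 = \<infinity> \<and> w2 = \<infinity> \<or>
      (\<exists>p q. w1 = ereal p \<and> w2 = ereal q \<and> real M < p \<and> real M < q)"
  shows "holds r (ediff (ereal \<alpha>) w1) c \<longleftrightarrow> holds r (ediff (ereal \<beta>) w2) c"
    and "holds r (ediff w1 (ereal \<alpha>)) c \<longleftrightarrow> holds r (ediff w2 (ereal \<beta>)) c"
proof -
  have "real M < p - \<alpha> \<and> real M < q - \<beta> \<and> \<alpha> - p < - real M \<and> \<beta> - q < - real M"
    if "real M < p" "real M < q" for p q
    using that assms(2,3) by linarith
  then show "holds r (ediff (ereal \<alpha>) w1) c \<longleftrightarrow> holds r (ediff (ereal \<beta>) w2) c"
    and "holds r (ediff w1 (ereal \<alpha>)) c \<longleftrightarrow> holds r (ediff w2 (ereal \<beta>)) c"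
    using w holds_above_abs_le_const[OF c] by (auto simp: ediff_def)
qed

lemma floor_eq_if_less_iff:
  fixes p q :: real
  assumes "p \<le> of_int m" "q \<le> of_int m" "\<And>k. k \<le> m \<Longrightarrow> p < of_int k \<longleftrightarrow> q < of_int k"
  shows "\<lfloor>p\<rfloor> = \<lfloor>q\<rfloor>"
proof -
  have "\<lfloor>p\<rfloor> \<le> m" "\<lfloor>q\<rfloor> \<le> m" using assms(1,2) by (simp_all add: floor_le_iff)
  then have "\<not> q < of_int \<lfloor>p\<rfloor>" using assms(1) assms(3)[of "\<lfloor>p\<rfloor>"] of_int_floor_le[of p] by linarith
  moreover have "\<not> p < of_int \<lfloor>q\<rfloor>" using \<open>\<lfloor>q\<rfloor> \<le> m\<close> assms(3)[of "\<lfloor>q\<rfloor>"] of_int_floor_le[of q] by linarith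
  ultimately have "\<lfloor>p\<rfloor> \<le> \<lfloor>q\<rfloor>" "\<lfloor>q\<rfloor> \<le> \<lfloor>p\<rfloor>" by (simp_all add: le_floor_iff)
  then show ?thesis by simp
qed

lemma approx_same_band:
  assumes "approx M v1 v2"
  shows "same_band M (cv v1 z) (cv v2 z)"
proof -
  have "holds r (cv v1 z) c \<longleftrightarrow> holds r (cv v2 z) c" if "le_const M c" for r c
    using assms that unfolding approx_conds by blast
  moreover have "le_const M (-\<infinity>)" "le_const M \<infinity>" "le_const M (ereal (real M))"
    unfolding le_const_def by (auto intro: exI[of _ "int M"])
  ultimately have "cv v1 z \<le> -\<infinity> \<longleftrightarrow> cv v2 z \<le> -\<infinity>" "cv v1 z < \<infinity> \<longleftrightarrow> cv v2 z < \<infinity>"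
    "cv v1 z \<le> ereal (real M) \<longleftrightarrow> cv v2 z \<le> ereal (real M)"
    using holds.simps by metis+
  then show ?thesis
    unfolding same_band_def by simp
qed

lemma same_band_small_iff: "same_band M (cv v1 z) (cv v2 z) \<Longrightarrow> small M v1 z \<longleftrightarrow> small M v2 z"
  unfolding same_band_def small_def by auto

lemma small_real_cv_le: "small M v z \<Longrightarrow> real_cv v z \<le> real M"
  using cv_eq_ereal_real_cv[of M v z] unfolding small_def by simp

lemma approx_int_diff_equiv:
  assumes approx: "approx M v1 v2"
  shows "int_diff_equiv {z. small M v1 z} (real_cv v1) (real_cv v2)"
proof -
  have small2: "small M v2 z" if "small M v1 z" for z
    using same_band_small_iff[OF approx_same_band[OF approx]] that by blast
  have "\<lfloor>real_cv v1 z\<rfloor> = \<lfloor>real_cv v2 z\<rfloor>" if "small M v1 z" for z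
  proof (rule floor_eq_if_less_iff[where m = "int M"])
    show "real_cv v1 z \<le> of_int (int M)" "real_cv v2 z \<le> of_int (int M)"
      using small_real_cv_le that small2[OF that] by simp_all
    fix k :: int assume "k \<le> int M"
    then have "le_const M (ereal (of_int k))" unfolding le_const_def by blast
    then have "holds Lt (cv v1 z) (ereal (of_int k)) \<longleftrightarrow> holds Lt (cv v2 z) (ereal (of_int k))"
      using approx unfolding approx_conds by blast
    then show "real_cv v1 z < of_int k \<longleftrightarrow> real_cv v2 z < of_int k"
      by (simp add: cv_eq_ereal_real_cv[OF that] cv_eq_ereal_real_cv[OF small2[OF that]])
  qed
  moreover have "frac (real_cv v1 y) \<le> frac (real_cv v1 z) \<longleftrightarrow> frac (real_cv v2 y) \<le> frac (real_cv v2 z)"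
    if "small M v1 y" "small M v1 z" for y z
    using approx that unfolding approx_conds by blast
  ultimately show ?thesis
    using int_diff_equiv_iff_floor_frac[of Zero "{z. small M v1 z}" "real_cv v1" "real_cv v2"] by simp
qed

lemma int_diff_equiv_holds_ediff:
  assumes equiv: "int_diff_equiv {z. small M v1 z} (real_cv v1) (real_cv v2)"
    and small: "small M v1 y" "small M v1 z" "small M v2 y" "small M v2 z"
    and c: "c = \<infinity> \<or> c = -\<infinity> \<or> (\<exists>k::int. c = ereal (of_int k))"
  shows "holds r (ediff (cv v1 y) (cv v1 z)) c \<longleftrightarrow> holds r (ediff (cv v2 y) (cv v2 z)) c"
proof -
  have diff: "ediff (cv v1 y) (cv v1 z) = ereal (real_cv v1 y - real_cv v1 z)"
    "ediff (cv v2 y) (cv v2 z) = ereal (real_cv v2 y - real_cv v2 z)"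
    using small by (simp_all add: cv_eq_ereal_real_cv[of M])
  from c consider "c = \<infinity>" | "c = -\<infinity>" | k where "c = ereal (of_int k)" by blast
  then show ?thesis
  proof cases
    case 3
    then show ?thesis
      using equiv int_diff_equiv_less[OF equiv] small(1,2)
      unfolding diff holds_ereal_of_int int_diff_equiv_def by (cases r) auto
  qed (cases r; simp add: diff)+
qed

lemma approxI:
  assumes band: "\<And>z. same_band M (cv v1 z) (cv v2 z)"
    and equiv: "int_diff_equiv {z. small M v1 z} (real_cv v1) (real_cv v2)"
    and diag: "\<And>x y r c. abs_le_const M c \<Longrightarrow> \<not> (small M v1 (Clk x) \<and> small M v1 (Clk y)) \<Longrightarrow>
      holds r (ediff (v1 x) (v1 y)) c \<longleftrightarrow> holds r (ediff (v2 x) (v2 y)) c"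
  shows "approx M v1 v2"
proof -
  have small_iff: "small M v1 z \<longleftrightarrow> small M v2 z" for z
    using same_band_small_iff[OF band] .
  note small_diff = int_diff_equiv_holds_ediff[OF equiv]
  have unary: "holds r (cv v1 z) c \<longleftrightarrow> holds r (cv v2 z) c" if "le_const M c" for z r c
  proof (cases "small M v1 z")
    case True
    then show ?thesis
      using small_diff[of z Zero c r] small_iff that unfolding le_const_def by auto
  next
    case False
    then show ?thesis using not_small_cases[OF band False] holds_above_le_const[OF _ that] by auto
  qed
  have binary: "holds r (ediff (cv v1 y) (cv v1 z)) c \<longleftrightarrow> holds r (ediff (cv v2 y) (cv v2 z)) c"
    if c: "abs_le_const M c" for y z r c
  proof (cases "small M v1 y \<and> small M v1 z")
    case True
    then show ?thesis using small_diff small_iff c unfolding abs_le_const_def by blast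
  next
    case not_small: False
    show ?thesis
    proof (cases y; cases z)
      fix z' assume "y = Zero" "z = Clk z'"
      then have "\<not> small M v1 z" using not_small by simp
      from holds_ediff_not_small(1)[OF c order.refl order.refl not_small_cases[OF band this]]
      show ?thesis using \<open>y = Zero\<close> by (simp add: zero_ereal_def)
    next
      fix y' assume "y = Clk y'" "z = Zero"
      then have "\<not> small M v1 y" using not_small by simp
      from holds_ediff_not_small(2)[OF c order.refl order.refl not_small_cases[OF band this]]
      show ?thesis using \<open>z = Zero\<close> by (simp add: zero_ereal_def)
    next
      fix y' z' assume "y = Clk y'" "z = Clk z'"
      then show ?thesis using diag[OF c, of y' z' r] not_small by simp
    qed (use not_small in simp)
  qed
  have "frac (real_cv v1 y) \<le> frac (real_cv v1 z) \<longleftrightarrow> frac (real_cv v2 y) \<le> frac (real_cv v2 z)"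
    if "small M v1 y" "small M v1 z" for y z
    using equiv that int_diff_equiv_iff_floor_frac[of Zero "{z. small M v1 z}" "real_cv v1" "real_cv v2"] by simp
  then show ?thesis
    unfolding approx_conds using unary binary by blast
qed

lemma approx_sym:
  assumes approx: "approx M v1 v2"
  shows "approx M v2 v1"
proof (rule approxI)
  have band: "same_band M (cv v1 z) (cv v2 z)" for z using approx_same_band[OF approx] .
  then show "same_band M (cv v2 z) (cv v1 z)" for z by (rule same_band_sym)
  have "{z. small M v2 z} = {z. small M v1 z}" using same_band_small_iff[OF band] by blast
  then show "int_diff_equiv {z. small M v2 z} (real_cv v2) (real_cv v1)"
    using int_diff_equiv_sym[OF approx_int_diff_equiv[OF approx]] by simp
  show "holds r (ediff (v2 x) (v2 y)) c \<longleftrightarrow> holds r (ediff (v1 x) (v1 y)) c" if "abs_le_const M c" for x y r c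
    using approx_diag[OF approx that] by simp
qed

subsection \<open>Delays\<close>

lemma shift_apply [simp]: "shift v d x = v x + ereal d"
  by (simp add: shift_def)

lemma ediff_shift [simp]: "ediff (a + ereal d) (b + ereal d) = ediff a b"
  unfolding ediff_def by (cases a; cases b) auto

lemma real_cv_shift:
  assumes "small M v (Clk x)"
  shows "real_cv (shift v d) (Clk x) = real_cv v (Clk x) + d"
proof -
  obtain p where "v x = ereal p" using cv_eq_ereal_real_cv[OF assms] by simp
  then show ?thesis by (simp add: real_cv_def)
qed

lemma small_shift: "0 \<le> d \<Longrightarrow> small M (shift v d) z \<Longrightarrow> small M v z"
  unfolding small_def by (cases z; cases "cv v z") auto

lemma same_band_shift:
  assumes band: "same_band M (cv v1 z) (cv v2 z)" and "0 \<le> d1" "0 \<le> d2"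
    and bound: "small M v1 z \<Longrightarrow> real_cv v1 z + d1 \<le> real M \<longleftrightarrow> real_cv v2 z + d2 \<le> real M"
  shows "same_band M (cv (shift v1 d1) z) (cv (shift v2 d2) z)"
proof (cases z)
  case (Clk y)
  show ?thesis
  proof (cases "small M v1 z")
    case True
    then obtain p1 p2 where "v1 y = ereal p1" "v2 y = ereal p2"
      using cv_eq_ereal_real_cv[of M] same_band_small_iff[OF band] unfolding Clk by (metis cv.simps(2))
    then show ?thesis using bound[OF True] unfolding Clk same_band_def by (simp add: real_cv_def)
  next
    case False
    then show ?thesis
      using not_small_cases[OF band False] assms(2,3) unfolding Clk same_band_def by auto
  qed
qed (simp add: same_band_def)

lemma approx_shift:
  fixes v1 v2 :: "'c::finite val"
  assumes approx: "approx M v1 v2" and "0 \<le> d1"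
  obtains d2 where "0 \<le> d2" "approx M (shift v1 d1) (shift v2 d2)"
proof -
  let ?S = "{z. small M v1 z}"
  have equiv: "int_diff_equiv ?S (real_cv v1) (real_cv v2)" using approx by (rule approx_int_diff_equiv)
  obtain b where placed: "\<And>i k. i \<in> ?S \<Longrightarrow>
      (- d1 - real_cv v1 i \<le> of_int k \<longleftrightarrow> b - real_cv v2 i \<le> of_int k) \<and>
      (real_cv v1 i - - d1 \<le> of_int k \<longleftrightarrow> real_cv v2 i - b \<le> of_int k)"
    by (rule int_diff_equiv_extend[OF equiv finite, where z = Zero and a = "- d1"]) simp_all
  define d2 where "d2 = - b"
  have "0 \<le> d2" using placed[of Zero 0] \<open>0 \<le> d1\<close> by (simp add: d2_def)
  have band: "same_band M (cv v1 z) (cv v2 z)" for z using approx by (rule approx_same_band)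
  have "approx M (shift v1 d1) (shift v2 d2)"
  proof (rule approxI)
    show "same_band M (cv (shift v1 d1) z) (cv (shift v2 d2) z)" for z
      using same_band_shift[OF band \<open>0 \<le> d1\<close> \<open>0 \<le> d2\<close>] placed[of z "int M"] by (simp add: d2_def)
    \<comment> \<open>Delaying by d1 is giving the clock 0 the value -d1, then translating everything by d1.\<close>
    have "int_diff_equiv (insert Zero ?S) ((real_cv v1)(Zero := - d1)) ((real_cv v2)(Zero := b))"
      using equiv placed by (rule int_diff_equiv_upd)
    then show "int_diff_equiv {z. small M (shift v1 d1) z} (real_cv (shift v1 d1)) (real_cv (shift v2 d2))"
    proof (rule int_diff_equiv_translate[where c = d1 and d = d2])
      show "{z. small M (shift v1 d1) z} \<subseteq> insert Zero ?S"
        using small_shift[OF \<open>0 \<le> d1\<close>] by blast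
      fix z assume "z \<in> {z. small M (shift v1 d1) z}"
      then have "small M v1 z" "small M v2 z"
        using small_shift[OF \<open>0 \<le> d1\<close>] same_band_small_iff[OF band] by blast+
      then show "real_cv (shift v1 d1) z = ((real_cv v1)(Zero := - d1)) z + d1 \<and>
          real_cv (shift v2 d2) z = ((real_cv v2)(Zero := b)) z + d2"
        by (cases z) (simp_all add: real_cv_shift d2_def)
    qed
    show "holds r (ediff (shift v1 d1 x) (shift v1 d1 y)) c \<longleftrightarrow>
        holds r (ediff (shift v2 d2 x) (shift v2 d2 y)) c"
      if "abs_le_const M c" "\<not> (small M (shift v1 d1) (Clk x) \<and> small M (shift v1 d1) (Clk y))"
      for x y r c
      using approx_diag[OF approx that(1)] by (simp add: shift_def)
  qed
  then show thesis using that \<open>0 \<le> d2\<close> by blast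
qed

subsection \<open>Clock changes, guards and transitions\<close>

lemma cv_fun_upd: "cv (v(x := a)) z = (if z = Clk x then a else cv v z)"
  by (cases z) auto

lemma real_cv_fun_upd: "real_cv (v(x := a)) z = (if z = Clk x then real_of_ereal a else real_cv v z)"
  by (simp add: real_cv_def cv_fun_upd)

lemma small_fun_upd:
  "small M (v(x := a)) z \<longleftrightarrow> (if z = Clk x then -\<infinity> < a \<and> a \<le> ereal (real M) else small M v z)"
  by (simp add: small_def cv_fun_upd)

lemma ediff_MInfty: "ediff (-\<infinity>) w = (if w = -\<infinity> then \<infinity> else -\<infinity>)" "ediff w (-\<infinity>) = \<infinity>"
  unfolding ediff_def by (cases w; simp)+

lemma approx_upd_MInfty:
  assumes approx: "approx M v1 v2"
  shows "approx M (v1(x := -\<infinity>)) (v2(x := -\<infinity>))"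
proof (rule approxI)
  show "same_band M (cv (v1(x := -\<infinity>)) z) (cv (v2(x := -\<infinity>)) z)" for z
    using approx_same_band[OF approx, of z] by (simp add: cv_fun_upd same_band_def)
  show "int_diff_equiv {z. small M (v1(x := -\<infinity>)) z} (real_cv (v1(x := -\<infinity>))) (real_cv (v2(x := -\<infinity>)))"
    by (rule int_diff_equiv_translate[OF approx_int_diff_equiv[OF approx], where c = 0 and d = 0])
      (auto simp: small_fun_upd real_cv_fun_upd split: if_splits)
  show "holds r (ediff ((v1(x := -\<infinity>)) y) ((v1(x := -\<infinity>)) z)) c \<longleftrightarrow>
      holds r (ediff ((v2(x := -\<infinity>)) y) ((v2(x := -\<infinity>)) z)) c"
    if "abs_le_const M c" for y z r c
  proof -
    have "v1 w = -\<infinity> \<longleftrightarrow> v2 w = -\<infinity>" for w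
      using approx_same_band[OF approx, of "Clk w"] by (simp add: same_band_def)
    then show ?thesis using approx_diag[OF approx that, of r y z] by (auto simp: ediff_MInfty)
  qed
qed

lemma approx_upd_diag:
  assumes approx: "approx M v1 v2" and "\<alpha> \<le> 0" "\<beta> \<le> 0" and c: "abs_le_const M c"
    and not_small: "\<not> (small M (v1(x := ereal \<alpha>)) (Clk y) \<and> small M (v1(x := ereal \<alpha>)) (Clk z))"
  shows "holds r (ediff ((v1(x := ereal \<alpha>)) y) ((v1(x := ereal \<alpha>)) z)) c \<longleftrightarrow>
    holds r (ediff ((v2(x := ereal \<beta>)) y) ((v2(x := ereal \<beta>)) z)) c"
proof -
  have band: "same_band M (cv v1 w) (cv v2 w)" for w using approx by (rule approx_same_band)
  have "-\<infinity> < ereal \<alpha> \<and> ereal \<alpha> \<le> ereal (real M)" using \<open>\<alpha> \<le> 0\<close> by simp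
  then consider "y = x" "\<not> small M v1 (Clk z)" | "z = x" "\<not> small M v1 (Clk y)" | "y \<noteq> x" "z \<noteq> x"
    using not_small by (auto simp: small_fun_upd split: if_splits)
  then show ?thesis
  proof cases
    case 1
    then show ?thesis
      using holds_ediff_not_small(1)[OF c \<open>\<alpha> \<le> 0\<close> \<open>\<beta> \<le> 0\<close> not_small_cases[OF band]] by force
  next
    case 2
    then show ?thesis
      using holds_ediff_not_small(2)[OF c \<open>\<alpha> \<le> 0\<close> \<open>\<beta> \<le> 0\<close> not_small_cases[OF band]] by force
  next
    case 3
    then show ?thesis using approx_diag[OF approx c] by simp
  qed
qed

lemma approx_upd_real:
  fixes v1 v2 :: "'c::finite val"
  assumes approx: "approx M v1 v2" and "\<alpha> \<le> 0"
  obtains \<beta> where "approx M (v1(x := ereal \<alpha>)) (v2(x := ereal \<beta>))"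
proof -
  let ?S = "{z. small M v1 z}"
  have equiv: "int_diff_equiv ?S (real_cv v1) (real_cv v2)" using approx by (rule approx_int_diff_equiv)
  obtain \<beta> where placed: "\<And>i k. i \<in> ?S \<Longrightarrow>
      (\<alpha> - real_cv v1 i \<le> of_int k \<longleftrightarrow> \<beta> - real_cv v2 i \<le> of_int k) \<and>
      (real_cv v1 i - \<alpha> \<le> of_int k \<longleftrightarrow> real_cv v2 i - \<beta> \<le> of_int k)"
    by (rule int_diff_equiv_extend[OF equiv finite, where z = Zero and a = \<alpha>]) simp_all
  have "\<beta> \<le> 0" using placed[of Zero 0] \<open>\<alpha> \<le> 0\<close> by simp
  have band: "same_band M (cv v1 z) (cv v2 z)" for z using approx by (rule approx_same_band)
  have "approx M (v1(x := ereal \<alpha>)) (v2(x := ereal \<beta>))"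
  proof (rule approxI)
    show "same_band M (cv (v1(x := ereal \<alpha>)) z) (cv (v2(x := ereal \<beta>)) z)" for z
      using band[of z] \<open>\<alpha> \<le> 0\<close> \<open>\<beta> \<le> 0\<close> by (simp add: cv_fun_upd same_band_def)
    have "int_diff_equiv (insert (Clk x) ?S) ((real_cv v1)(Clk x := \<alpha>)) ((real_cv v2)(Clk x := \<beta>))"
      using equiv placed by (rule int_diff_equiv_upd)
    then show "int_diff_equiv {z. small M (v1(x := ereal \<alpha>)) z} (real_cv (v1(x := ereal \<alpha>))) (real_cv (v2(x := ereal \<beta>)))"
      by (rule int_diff_equiv_translate[where c = 0 and d = 0])
        (auto simp: small_fun_upd real_cv_fun_upd split: if_splits)
    show "holds r (ediff ((v1(x := ereal \<alpha>)) y) ((v1(x := ereal \<alpha>)) z)) c \<longleftrightarrow>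
        holds r (ediff ((v2(x := ereal \<beta>)) y) ((v2(x := ereal \<beta>)) z)) c"
      if "abs_le_const M c" "\<not> (small M (v1(x := ereal \<alpha>)) (Clk y) \<and> small M (v1(x := ereal \<alpha>)) (Clk z))"
      for y z r c
      using approx_upd_diag[OF approx \<open>\<alpha> \<le> 0\<close> \<open>\<beta> \<le> 0\<close> that] .
  qed
  then show thesis by (rule that)
qed

lemma approx_upd:
  fixes v1 v2 :: "'c::finite val"
  assumes "approx M v1 v2" and "a \<le> 0"
  obtains b where "approx M (v1(x := a)) (v2(x := b))"
proof (cases a)
  case (real \<alpha>)
  then show thesis using approx_upd_real[OF assms(1)] assms(2) that by auto
next
  case MInf
  then show thesis using approx_upd_MInfty[OF assms(1)] that by blast
qed (use assms(2) in simp)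

lemma approx_sign:
  assumes "approx M v1 v2"
  shows "v1 x \<le> 0 \<longleftrightarrow> v2 x \<le> 0" and "v1 x < 0 \<longleftrightarrow> v2 x < 0"
proof -
  have "le_const M 0" unfolding le_const_def by (auto simp: zero_ereal_def)
  then have "holds r (v1 x) 0 \<longleftrightarrow> holds r (v2 x) 0" for r
    using assms unfolding approx_conds by (metis cv.simps(2))
  from this[of Le] this[of Lt] show "v1 x \<le> 0 \<longleftrightarrow> v2 x \<le> 0" "v1 x < 0 \<longleftrightarrow> v2 x < 0" by simp_all
qed

lemma approx_is_val: "approx M v1 v2 \<Longrightarrow> is_val XF v1 \<Longrightarrow> is_val XF v2"
  unfolding is_val_def using approx_sign by (meson not_le)

lemma approx_override:
  fixes v1 v2 :: "'c::finite val"
  assumes "approx M v1 v2" "\<forall>x\<in>S. v1' x \<le> 0" "\<forall>x. x \<notin> S \<longrightarrow> v1' x = v1 x"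
  shows "\<exists>v2'. approx M v1' v2' \<and> (\<forall>x. x \<notin> S \<longrightarrow> v2' x = v2 x)"
  using finite[of S] assms
proof (induction S arbitrary: v1 v2 rule: finite_induct)
  case empty
  then have "v1' = v1" by auto
  then show ?case using empty.prems(1) by blast
next
  case (insert x S)
  obtain b where "approx M (v1(x := v1' x)) (v2(x := b))"
    using approx_upd[OF insert.prems(1)] insert.prems(2) by blast
  moreover have "\<forall>z. z \<notin> S \<longrightarrow> v1' z = (v1(x := v1' x)) z" using insert.prems(3) by auto
  ultimately obtain v2' where "approx M v1' v2'" "\<forall>z. z \<notin> S \<longrightarrow> v2' z = (v2(x := b)) z"
    using insert.IH insert.prems(2) by blast
  then show ?case by auto
qed

lemma approx_change:
  fixes v1 v2 :: "'c::finite val"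
  assumes approx: "approx M v1 v2" and "v1' \<in> change XF R v1"
  shows "\<exists>v2'\<in>change XF R v2. approx M v1' v2'"
proof -
  have val: "is_val XF v1'" and reset: "\<forall>x\<in>R - XF. v1' x = 0" and kept: "\<forall>x. x \<notin> R \<longrightarrow> v1' x = v1 x"
    using assms(2) unfolding change_def by auto
  have "v1' x \<le> 0" if "x \<in> R" for x
    using val reset that unfolding is_val_def by (cases "x \<in> XF") auto
  then obtain v2' where approx': "approx M v1' v2'" and kept': "\<forall>x. x \<notin> R \<longrightarrow> v2' x = v2 x"
    using approx_override[OF approx _ kept] by blast
  have "v2' x = 0" if "x \<in> R - XF" for x
  proof -
    have "v2' x \<le> 0" "\<not> v2' x < 0" using approx_sign[OF approx', of x] reset that by auto
    then show ?thesis by simp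
  qed
  then have "v2' \<in> change XF R v2"
    unfolding change_def using approx_is_val[OF approx' val] kept' by blast
  then show ?thesis using approx' by blast
qed

lemma approx_sat:
  assumes "approx M v1 v2" "\<forall>(x, y, r, c)\<in>set g. abs_le_const M c"
  shows "sat v1 g \<longleftrightarrow> sat v2 g"
  unfolding sat_def
proof (rule ball_cong[OF refl])
  fix atom assume "atom \<in> set g"
  moreover obtain x y r c where atom: "atom = (x, y, r, c)" by (cases atom)
  ultimately have "abs_le_const M c" using assms(2) by auto
  then show "sat_atom v1 atom \<longleftrightarrow> sat_atom v2 atom"
    using assms(1) unfolding atom approx_conds by simp
qed

lemma prog_guards_Cons:
  "prog_guards (Guard g # p) = set g \<union> prog_guards p" "prog_guards (Change R # p) = prog_guards p"
  unfolding prog_guards_def by simp_all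

lemma approx_exec:
  fixes v1 v2 :: "'c::finite val"
  assumes "\<forall>(x, y, r, c)\<in>prog_guards p. abs_le_const M c" "approx M v1 v2" "v1' \<in> exec XF p v1"
  shows "\<exists>v2'\<in>exec XF p v2. approx M v1' v2'"
  using assms
proof (induction p arbitrary: v1 v2)
  case Nil
  then show ?case by simp
next
  case (Cons i p)
  show ?case
  proof (cases i)
    case (Guard g)
    then have "sat v1 g" "v1' \<in> exec XF p v1"
      using Cons.prems(3) by (auto split: if_splits)
    moreover have "sat v1 g \<longleftrightarrow> sat v2 g"
      using approx_sat[OF Cons.prems(2)] Cons.prems(1) unfolding Guard prog_guards_Cons by blast
    ultimately show ?thesis
      using Cons.IH Cons.prems(1,2) unfolding Guard prog_guards_Cons by auto
  next
    case (Change R)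
    then obtain u1 where "u1 \<in> change XF R v1" "v1' \<in> exec XF p u1"
      using Cons.prems(3) by auto
    moreover obtain u2 where "u2 \<in> change XF R v2" "approx M u1 u2"
      using approx_change[OF Cons.prems(2) calculation(1)] by blast
    ultimately show ?thesis
      using Cons.IH Cons.prems(1) unfolding Change prog_guards_Cons by fastforce
  qed
qed

lemma trans_atoms_abs_le_const:
  assumes "wf_gta A" "bounded_by M A" "(x, y, r, c) \<in> trans_atoms A"
  shows "abs_le_const M c"
proof -
  have "\<forall>(x, y, r, c)\<in>trans_atoms A \<union> init_atoms A. is_const c"
    using assms(1) unfolding wf_gta_def by (elim conjE)
  then have "is_const c" using assms(3) by (metis (no_types, lifting) UnI1 case_prodD)
  moreover have "\<bar>c\<bar> \<noteq> \<infinity> \<longrightarrow> \<bar>c\<bar> \<le> ereal (real M)"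
    using assms(2,3) unfolding bounded_by_def by fastforce
  ultimately show ?thesis
    unfolding is_const_def abs_le_const_def by (auto simp flip: of_int_abs)
qed

lemma approx_step:
  fixes v1 v2 :: "'c::finite val"
  assumes "\<forall>(x, y, r, c)\<in>trans_atoms A. abs_le_const M c"
    and "approx M v1 v2" "step XF A q v1 t q' v1'"
  shows "\<exists>v2'. step XF A q v2 t q' v2' \<and> approx M v1' v2'"
proof -
  obtain a p where t: "t \<in> trans A" "t = (q, a, p, q')" and "v1' \<in> exec XF p v1"
    using assms(3) unfolding step_def by blast
  moreover have "\<forall>(x, y, r, c)\<in>prog_guards p. abs_le_const M c"
    using assms(1) t unfolding trans_atoms_def by blast
  ultimately obtain v2' where "v2' \<in> exec XF p v2" "approx M v1' v2'"
    using approx_exec assms(2) by blast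
  then show ?thesis unfolding step_def using t by blast
qed

lemma approx_ta_sim:
  fixes A :: "('q, 's, 'c::finite) gta"
  assumes "\<forall>(x, y, r, c)\<in>trans_atoms A. abs_le_const M c"
  shows "ta_sim XF A (approx M)"
  unfolding ta_sim_def
proof (intro allI impI conjI)
  fix v1 v2 :: "'c val" and d1 :: real
  assume "is_val XF v1 \<and> is_val XF v2 \<and> approx M v1 v2" "0 \<le> d1 \<and> is_val XF (shift v1 d1)"
  then obtain d2 where "0 \<le> d2" "approx M (shift v1 d1) (shift v2 d2)"
    using approx_shift by blast
  then show "\<exists>d2\<ge>0. is_val XF (shift v2 d2) \<and> approx M (shift v1 d1) (shift v2 d2)"
    using approx_is_val \<open>0 \<le> d1 \<and> is_val XF (shift v1 d1)\<close> by blast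
next
  fix v1 v2 :: "'c val" and t q q' v1'
  assume "is_val XF v1 \<and> is_val XF v2 \<and> approx M v1 v2" "step XF A q v1 t q' v1'"
  then show "\<exists>v2'. step XF A q v2 t q' v2' \<and> approx M v1' v2'"
    using approx_step[OF assms] by blast
qed

theorem lemma8:
  fixes A :: "('q, 's, 'c::finite) gta" and XF :: "'c set" and M :: nat
  assumes "wf_gta A" and "safe XF A" and "bounded_by M A"
  shows "ta_bisim XF A (approx M)"
proof -
  have sim: "ta_sim XF A (approx M)"
    using approx_ta_sim trans_atoms_abs_le_const[OF assms(1,3)] by blast
  have sym: "(\<lambda>v1 v2. approx M v2 v1) = approx M"
    using approx_sym by blast
  show ?thesis unfolding ta_bisim_def sym using sim by blast
qed

end
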